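(* Let $1\le p\le\infty$, let $X,Y$ be real Banach spaces, let $U\subseteq X$ be an open convex subset, and let $f:U\to Y$ be a (Fréchet) differentiable mapping such that for every $U$-bounded Dunford-Pettis set $K\subset U$, the set $f'(K)$ is a $p$-$(DPL)$ set in $L(X,Y)$. Then $f$ is $p$-Right sequentially continuous.
   Context: A subset $B\subset U$ is $U$-bounded if it is bounded and its distance to the boundary of $U$ is strictly positive; a sequence is $U$-bounded if its set of terms is. A sequence $(x_n)$ in $X$ is weakly $p$-summable if $(x^*(x_n))_n\in\ell_p$ for every $x^*\in X^*$ (for $p=\infty$: weakly null). A sequence $(x_n)$ is weakly $p$-Cauchy if $(x_{m_k}-x_{n_k})_k$ is weakly $p$-summable for all strictly increasing index sequences $(m_k),(n_k)$. A bounded set $K\subset X$ is a Dunford-Pettis set if every weakly null sequence in $X^*$ converges to $0$ uniformly on $K$. A $p$-Right null (resp. $p$-Right Cauchy) sequence is a weakly $p$-summable (resp. weakly $p$-Cauchy) sequence whose set of terms is a Dunford-Pettis set. A set $K\subset L(X,Y)$ is a $p$-$(DPL)$ set if $\lim_n\sup_{T\in K}\|T(x_n)\|=0$ for every $p$-Right null sequence $(x_n)$ in $X$. A mapping $f:U\to Y$ is $p$-Right sequentially continuous if it takes $p$-Right Cauchy $U$-bounded sequences of $U$ into norm convergent sequences in $Y$. *)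

theory Defs
  imports "HOL-Analysis.Analysis"
begin

definition weakly_null :: "(nat \<Rightarrow> 'a::real_normed_vector) \<Rightarrow> bool" where
  "weakly_null x \<longleftrightarrow> (\<forall>\<phi> :: 'a \<Rightarrow>\<^sub>L real. (\<lambda>n. blinfun_apply \<phi> (x n)) \<longlonglongrightarrow> 0)"

definition weakly_p_summable :: "ereal \<Rightarrow> (nat \<Rightarrow> 'a::real_normed_vector) \<Rightarrow> bool" where
  "weakly_p_summable p x \<longleftrightarrow>
     (if p = \<infinity> then weakly_null x
      else (\<forall>\<phi> :: 'a \<Rightarrow>\<^sub>L real. summable (\<lambda>n. \<bar>blinfun_apply \<phi> (x n)\<bar> powr real_of_ereal p)))"

definition weakly_p_cauchy :: "ereal \<Rightarrow> (nat \<Rightarrow> 'a::real_normed_vector) \<Rightarrow> bool" where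
  "weakly_p_cauchy p x \<longleftrightarrow>
     (\<forall>m n :: nat \<Rightarrow> nat. strict_mono m \<and> strict_mono n \<longrightarrow>
        weakly_p_summable p (\<lambda>k. x (m k) - x (n k)))"

definition DP_set :: "'a::real_normed_vector set \<Rightarrow> bool" where
  "DP_set K \<longleftrightarrow> bounded K \<and>
     (\<forall>xs :: nat \<Rightarrow> ('a \<Rightarrow>\<^sub>L real). weakly_null xs \<longrightarrow>
        (\<forall>e>0. \<forall>\<^sub>F n in sequentially. \<forall>k\<in>K. \<bar>blinfun_apply (xs n) k\<bar> < e))"

definition p_right_null :: "ereal \<Rightarrow> (nat \<Rightarrow> 'a::real_normed_vector) \<Rightarrow> bool" where
  "p_right_null p x \<longleftrightarrow> weakly_p_summable p x \<and> DP_set (range x)"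

definition p_right_cauchy :: "ereal \<Rightarrow> (nat \<Rightarrow> 'a::real_normed_vector) \<Rightarrow> bool" where
  "p_right_cauchy p x \<longleftrightarrow> weakly_p_cauchy p x \<and> DP_set (range x)"

definition p_DPL_set :: "ereal \<Rightarrow> ('a::real_normed_vector \<Rightarrow>\<^sub>L 'b::real_normed_vector) set \<Rightarrow> bool" where
  "p_DPL_set p K \<longleftrightarrow>
     (\<forall>x. p_right_null p x \<longrightarrow>
        (\<forall>e>0. \<forall>\<^sub>F n in sequentially. \<forall>T\<in>K. norm (blinfun_apply T (x n)) < e))"

text \<open>U-bounded subset: bounded subset of U at strictly positive distance from the
  boundary of U (vacuous distance condition if the boundary is empty).\<close>
definition U_bounded :: "'a::real_normed_vector set \<Rightarrow> 'a set \<Rightarrow> bool" where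
  "U_bounded U B \<longleftrightarrow> B \<subseteq> U \<and> bounded B \<and>
     (\<exists>\<delta>>0. \<forall>b\<in>B. \<forall>z\<in>frontier U. \<delta> \<le> dist b z)"

definition p_right_seq_continuous ::
  "ereal \<Rightarrow> 'a::real_normed_vector set \<Rightarrow> ('a \<Rightarrow> 'b::real_normed_vector) \<Rightarrow> bool" where
  "p_right_seq_continuous p U f \<longleftrightarrow>
     (\<forall>x. p_right_cauchy p x \<and> U_bounded U (range x) \<longrightarrow> convergent (\<lambda>n. f (x n)))"

end

theory Submission
  imports Defs
begin

text \<open>Let \<open>x\<close> be a \<open>U\<close>-bounded \<open>p\<close>-Right Cauchy sequence and \<open>K\<close> the convex hull of its terms.
  Uniform smallness of functionals and distance from the frontier both pass to convex hulls, so \<open>K\<close>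
  is a \<open>U\<close>-bounded Dunford-Pettis set and \<open>Df ` K\<close> is a \<open>p\<close>-(DPL) set. For strictly increasing
  \<open>m\<close>, \<open>n\<close> the differences \<open>x (m k) - x (n k)\<close> are \<open>p\<close>-Right null, so \<open>Df y (x (m k) - x (n k)) \<rightarrow> 0\<close>
  uniformly in \<open>y \<in> K\<close>; the mean value inequality on the segment from \<open>x (n k)\<close> to \<open>x (m k)\<close>, which
  lies in \<open>K\<close>, then gives \<open>f (x (m k)) - f (x (n k)) \<rightarrow> 0\<close>. As \<open>m\<close>, \<open>n\<close> are arbitrary, \<open>f \<circ> x\<close> is
  Cauchy, hence convergent in the Banach space.\<close>

lemma DP_set_subset:
  assumes "DP_set B" and "A \<subseteq> B"
  shows "DP_set A"
  unfolding DP_set_def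
proof (intro conjI allI impI)
  show "bounded A"
    using assms bounded_subset unfolding DP_set_def by blast
  fix \<phi> :: "nat \<Rightarrow> 'a \<Rightarrow>\<^sub>L real" and e :: real
  assume "weakly_null \<phi>" "e > 0"
  then have "\<forall>\<^sub>F n in sequentially. \<forall>k\<in>B. \<bar>blinfun_apply (\<phi> n) k\<bar> < e"
    using assms(1) unfolding DP_set_def by blast
  then show "\<forall>\<^sub>F n in sequentially. \<forall>k\<in>A. \<bar>blinfun_apply (\<phi> n) k\<bar> < e"
    by eventually_elim (use assms(2) in blast)
qed

lemma DP_set_convex_hull:
  assumes "DP_set A"
  shows "DP_set (convex hull A)"
  unfolding DP_set_def
proof (intro conjI allI impI)
  show "bounded (convex hull A)"
    using assms bounded_convex_hull unfolding DP_set_def by blast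
  fix \<phi> :: "nat \<Rightarrow> 'a \<Rightarrow>\<^sub>L real" and e :: real
  assume "weakly_null \<phi>" "e > 0"
  then have "\<forall>\<^sub>F n in sequentially. \<forall>k\<in>A. \<bar>blinfun_apply (\<phi> n) k\<bar> < e"
    using assms unfolding DP_set_def by blast
  then have "\<forall>\<^sub>F n in sequentially. A \<subseteq> blinfun_apply (\<phi> n) -` ball 0 e"
    by eventually_elim auto
  then have "\<forall>\<^sub>F n in sequentially. convex hull A \<subseteq> blinfun_apply (\<phi> n) -` ball 0 e"
    by eventually_elim
      (erule hull_minimal, intro convex_linear_vimage bounded_linear.linear blinfun.bounded_linear_right convex_ball)
  then show "\<forall>\<^sub>F n in sequentially. \<forall>k\<in>convex hull A. \<bar>blinfun_apply (\<phi> n) k\<bar> < e"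
    by eventually_elim auto
qed

lemma DP_set_differences:
  assumes "DP_set A"
  shows "DP_set ((\<lambda>(a, b). a - b) ` (A \<times> A))"
  unfolding DP_set_def
proof (intro conjI allI impI)
  show "bounded ((\<lambda>(a, b). a - b) ` (A \<times> A))"
    using assms bounded_minus unfolding DP_set_def by blast
  fix \<phi> :: "nat \<Rightarrow> 'a \<Rightarrow>\<^sub>L real" and e :: real
  assume "weakly_null \<phi>" "e > 0"
  then have "\<forall>\<^sub>F n in sequentially. \<forall>k\<in>A. \<bar>blinfun_apply (\<phi> n) k\<bar> < e / 2"
    using assms half_gt_zero unfolding DP_set_def by blast
  then show "\<forall>\<^sub>F n in sequentially. \<forall>k\<in>(\<lambda>(a, b). a - b) ` (A \<times> A). \<bar>blinfun_apply (\<phi> n) k\<bar> < e"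
  proof (eventually_elim, safe)
    fix n a b
    assume "\<forall>k\<in>A. \<bar>blinfun_apply (\<phi> n) k\<bar> < e / 2" and "a \<in> A" "b \<in> A"
    then have "\<bar>blinfun_apply (\<phi> n) a\<bar> < e / 2" "\<bar>blinfun_apply (\<phi> n) b\<bar> < e / 2"
      by auto
    then show "\<bar>blinfun_apply (\<phi> n) (a - b)\<bar> < e"
      unfolding blinfun.diff_right by linarith
  qed
qed

lemma ball_subset_if_frontier_dist:
  fixes U :: "'a::real_normed_vector set"
  assumes "b \<in> U" and "\<And>z. z \<in> frontier U \<Longrightarrow> \<delta> \<le> dist b z"
  shows "ball b \<delta> \<subseteq> U"
proof
  fix y assume y: "y \<in> ball b \<delta>"
  show "y \<in> U"
  proof (rule ccontr)
    assume "y \<notin> U"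
    then obtain z where z: "z \<in> closed_segment b y" "z \<in> frontier U"
      using connected_Int_frontier[of "closed_segment b y" U] assms(1) by auto
    then have "dist b z \<le> dist b y"
      using segment_bound1[OF z(1)] by (simp add: dist_norm norm_minus_commute)
    then show False
      using assms(2)[OF z(2)] y by simp
  qed
qed

lemma frontier_dist_if_ball_subset:
  assumes "ball b \<delta> \<subseteq> U" and "z \<in> frontier U"
  shows "\<delta> \<le> dist b z"
proof (rule ccontr)
  assume "\<not> \<delta> \<le> dist b z"
  then have "z \<in> ball b \<delta>"
    by simp
  then have "z \<in> interior U"
    using interior_maximal[OF assms(1) open_ball] by blast
  then show False
    using assms(2) by (simp add: frontier_def)
qed

lemma U_bounded_iff_balls:
  fixes U :: "'a::real_normed_vector set"
  shows "U_bounded U B \<longleftrightarrow> bounded B \<and> (\<exists>\<delta>>0. \<forall>b\<in>B. ball b \<delta> \<subseteq> U)"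
proof
  assume "U_bounded U B"
  then obtain \<delta> where "\<delta> > 0" "bounded B" "B \<subseteq> U" "\<forall>b\<in>B. \<forall>z\<in>frontier U. \<delta> \<le> dist b z"
    unfolding U_bounded_def by blast
  then show "bounded B \<and> (\<exists>\<delta>>0. \<forall>b\<in>B. ball b \<delta> \<subseteq> U)"
    using ball_subset_if_frontier_dist by blast
next
  assume "bounded B \<and> (\<exists>\<delta>>0. \<forall>b\<in>B. ball b \<delta> \<subseteq> U)"
  then obtain \<delta> where "\<delta> > 0" "bounded B" and balls: "\<forall>b\<in>B. ball b \<delta> \<subseteq> U"
    by blast
  moreover have "B \<subseteq> U"
    using balls \<open>\<delta> > 0\<close> centre_in_ball by blast
  moreover have "\<forall>b\<in>B. \<forall>z\<in>frontier U. \<delta> \<le> dist b z"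
    using balls frontier_dist_if_ball_subset by blast
  ultimately show "U_bounded U B"
    unfolding U_bounded_def by blast
qed

lemma convex_centres_of_balls_subset:
  fixes U :: "'a::real_normed_vector set"
  assumes "convex U"
  shows "convex {y. ball y \<delta> \<subseteq> U}"
proof (rule convexI, safe)
  fix y1 y2 w and u v :: real
  assume balls: "ball y1 \<delta> \<subseteq> U" "ball y2 \<delta> \<subseteq> U" and uv: "0 \<le> u" "0 \<le> v" "u + v = 1"
    and w: "w \<in> ball (u *\<^sub>R y1 + v *\<^sub>R y2) \<delta>"
  define h where "h = w - (u *\<^sub>R y1 + v *\<^sub>R y2)"
  have "y1 + h \<in> U" "y2 + h \<in> U"
    using w balls by (auto simp: h_def dist_norm norm_minus_commute)
  then have combination_in_U: "u *\<^sub>R (y1 + h) + v *\<^sub>R (y2 + h) \<in> U"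
    using convexD[OF assms _ _ uv] by blast
  have "u *\<^sub>R (y1 + h) + v *\<^sub>R (y2 + h) = (u *\<^sub>R y1 + v *\<^sub>R y2) + (u + v) *\<^sub>R h"
    by (simp add: algebra_simps)
  also have "\<dots> = w"
    using uv(3) by (simp add: h_def)
  finally show "w \<in> U"
    using combination_in_U by simp
qed

lemma U_bounded_convex_hull:
  fixes U :: "'a::real_normed_vector set"
  assumes "convex U" and "U_bounded U B"
  shows "U_bounded U (convex hull B)"
proof -
  obtain \<delta> where "\<delta> > 0" and "B \<subseteq> {y. ball y \<delta> \<subseteq> U}" and "bounded B"
    using assms(2) unfolding U_bounded_iff_balls by auto
  then have "convex hull B \<subseteq> {y. ball y \<delta> \<subseteq> U}"
    by (intro hull_minimal convex_centres_of_balls_subset assms(1))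
  then show ?thesis
    unfolding U_bounded_iff_balls using \<open>\<delta> > 0\<close> \<open>bounded B\<close> bounded_convex_hull by blast
qed

lemma differentiable_bound_segment_direction:
  fixes f :: "'a::real_normed_vector \<Rightarrow> 'b::real_normed_vector"
  assumes deriv: "\<And>y. y \<in> closed_segment a b \<Longrightarrow> (f has_derivative f' y) (at y)"
    and bound: "\<And>y. y \<in> closed_segment a b \<Longrightarrow> norm (f' y (b - a)) \<le> B"
  shows "norm (f b - f a) \<le> B"
proof -
  define \<gamma> where "\<gamma> t = a + t *\<^sub>R (b - a)" for t :: real
  have \<gamma>_in_segment: "\<gamma> t \<in> closed_segment a b" if "t \<in> {0..1}" for t
    using that unfolding in_segment \<gamma>_def by (auto intro!: exI[of _ t] simp: algebra_simps)
  have path_deriv: "((f \<circ> \<gamma>) has_derivative (\<lambda>h. h *\<^sub>R f' (\<gamma> t) (b - a))) (at t within {0..1})"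
    if "t \<in> {0..1}" for t
  proof -
    have "(\<gamma> has_derivative (\<lambda>h. h *\<^sub>R (b - a))) (at t)"
      unfolding \<gamma>_def by (auto intro!: derivative_eq_intros)
    then have "((f \<circ> \<gamma>) has_derivative (\<lambda>h. f' (\<gamma> t) (h *\<^sub>R (b - a)))) (at t)"
      using diff_chain_at deriv[OF \<gamma>_in_segment[OF that]] by (auto simp: o_def)
    moreover have "linear (f' (\<gamma> t))"
      using deriv[OF \<gamma>_in_segment[OF that]] has_derivative_linear by blast
    ultimately show ?thesis
      by (auto intro: has_derivative_at_withinI simp: linear_scale)
  qed
  have path_onorm: "onorm (\<lambda>h. h *\<^sub>R f' (\<gamma> t) (b - a)) \<le> B" if "t \<in> {0..1}" for t
  proof (rule onorm_bound)
    show "0 \<le> B"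
      using bound[OF \<gamma>_in_segment[OF that]] norm_ge_zero order_trans by blast
    show "norm (h *\<^sub>R f' (\<gamma> t) (b - a)) \<le> B * norm h" for h :: real
      using mult_right_mono[OF bound[OF \<gamma>_in_segment[OF that]] abs_ge_zero[of h]]
      by (simp add: mult.commute)
  qed
  have "norm ((f \<circ> \<gamma>) 1 - (f \<circ> \<gamma>) 0) \<le> B * norm (1 - 0 :: real)"
    by (rule differentiable_bound[OF convex_real_interval(5) path_deriv path_onorm]) auto
  then show ?thesis
    by (simp add: \<gamma>_def)
qed

lemma Cauchy_if_subsequence_differences_tendsto_zero:
  fixes s :: "nat \<Rightarrow> 'a::real_normed_vector"
  assumes "\<And>m n. strict_mono m \<Longrightarrow> strict_mono n \<Longrightarrow> (\<lambda>k. s (m k) - s (n k)) \<longlonglongrightarrow> 0"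
  shows "Cauchy s"
proof (rule ccontr)
  assume "\<not> Cauchy s"
  then obtain e where "e > 0" and far: "\<And>N. \<exists>i\<ge>N. \<exists>j\<ge>N. e \<le> dist (s i) (s j)"
    unfolding Cauchy_def by (meson not_less)
  have "\<exists>r. \<forall>k. e \<le> dist (s (fst (r k))) (s (snd (r k))) \<and>
      fst (r k) < fst (r (Suc k)) \<and> snd (r k) < snd (r (Suc k))"
  proof (rule dependent_nat_choice)
    show "\<exists>ij. e \<le> dist (s (fst ij)) (s (snd ij))"
      using far[of 0] by auto
    show "\<exists>ij'. e \<le> dist (s (fst ij')) (s (snd ij')) \<and> fst ij < fst ij' \<and> snd ij < snd ij'" for ij
      using far[of "Suc (max (fst ij) (snd ij))"] by (force simp: Suc_le_eq)
  qed
  then obtain r where r: "\<And>k. e \<le> dist (s (fst (r k))) (s (snd (r k)))"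
    and "\<And>k. fst (r k) < fst (r (Suc k))" "\<And>k. snd (r k) < snd (r (Suc k))"
    by blast
  then have "strict_mono (fst \<circ> r)" "strict_mono (snd \<circ> r)"
    unfolding strict_mono_Suc_iff by simp_all
  then have "(\<lambda>k. s (fst (r k)) - s (snd (r k))) \<longlonglongrightarrow> 0"
    using assms by (auto simp: o_def)
  then obtain k where "norm (s (fst (r k)) - s (snd (r k))) < e"
    using \<open>e > 0\<close> by (auto dest!: LIMSEQ_D)
  then show False
    using r[of k] by (simp add: dist_norm)
qed

lemma p_right_null_subsequence_differences:
  assumes "p_right_cauchy p x" and "strict_mono m" and "strict_mono n"
  shows "p_right_null p (\<lambda>k. x (m k) - x (n k))"
proof -
  have "range (\<lambda>k. x (m k) - x (n k)) \<subseteq> (\<lambda>(a, b). a - b) ` (range x \<times> range x)"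
    by auto
  then have "DP_set (range (\<lambda>k. x (m k) - x (n k)))"
    using assms(1) DP_set_differences DP_set_subset unfolding p_right_cauchy_def by blast
  then show ?thesis
    using assms unfolding p_right_null_def p_right_cauchy_def weakly_p_cauchy_def by blast
qed

lemma increments_tendsto_zero_if_p_DPL_set:
  fixes f :: "'a::real_normed_vector \<Rightarrow> 'b::real_normed_vector"
  assumes "convex K"
    and deriv: "\<And>y. y \<in> K \<Longrightarrow> (f has_derivative blinfun_apply (Df y)) (at y)"
    and DPL: "p_DPL_set p (Df ` K)"
    and null: "p_right_null p (\<lambda>k. b k - a k)"
    and "\<And>k. a k \<in> K" and "\<And>k. b k \<in> K"
  shows "(\<lambda>k. f (b k) - f (a k)) \<longlonglongrightarrow> 0"
proof (rule tendstoI)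
  fix e :: real
  assume "e > 0"
  then have "\<forall>\<^sub>F k in sequentially. \<forall>T\<in>Df ` K. norm (blinfun_apply T (b k - a k)) < e / 2"
    using DPL null half_gt_zero unfolding p_DPL_set_def by blast
  then show "\<forall>\<^sub>F k in sequentially. dist (f (b k) - f (a k)) 0 < e"
  proof eventually_elim
    case (elim k)
    have segment: "closed_segment (a k) (b k) \<subseteq> K"
      using assms closed_segment_subset by blast
    have "norm (f (b k) - f (a k)) \<le> e / 2"
    proof (rule differentiable_bound_segment_direction[where f' = "\<lambda>y. blinfun_apply (Df y)"])
      show "(f has_derivative blinfun_apply (Df y)) (at y)" if "y \<in> closed_segment (a k) (b k)" for y
        using deriv segment that by blast
      show "norm (blinfun_apply (Df y) (b k - a k)) \<le> e / 2" if "y \<in> closed_segment (a k) (b k)" for y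
        using elim segment that by fastforce
    qed
    then show ?case
      using \<open>e > 0\<close> by simp
  qed
qed

theorem theorem3p7:
  fixes p :: ereal
    and U :: "'a::banach set"
    and f :: "'a \<Rightarrow> 'b::banach"
    and Df :: "'a \<Rightarrow> ('a \<Rightarrow>\<^sub>L 'b)"
  assumes "1 \<le> p"
    and "open U" and "convex U"
    and "\<And>x. x \<in> U \<Longrightarrow> (f has_derivative blinfun_apply (Df x)) (at x)"
    and "\<And>K. U_bounded U K \<Longrightarrow> DP_set K \<Longrightarrow> p_DPL_set p (Df ` K)"
  shows "p_right_seq_continuous p U f"
  unfolding p_right_seq_continuous_def
proof (intro allI impI)
  fix x :: "nat \<Rightarrow> 'a"
  assume "p_right_cauchy p x \<and> U_bounded U (range x)"
  then have cauchy: "p_right_cauchy p x" and "U_bounded U (range x)"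
    by auto
  define K where "K = convex hull (range x)"
  have "U_bounded U K"
    unfolding K_def using U_bounded_convex_hull assms(3) \<open>U_bounded U (range x)\<close> by blast
  moreover have "DP_set K"
    unfolding K_def using DP_set_convex_hull cauchy unfolding p_right_cauchy_def by blast
  ultimately have DPL: "p_DPL_set p (Df ` K)" and "K \<subseteq> U"
    using assms(5) unfolding U_bounded_def by auto
  have "Cauchy (\<lambda>n. f (x n))"
  proof (rule Cauchy_if_subsequence_differences_tendsto_zero)
    fix m n :: "nat \<Rightarrow> nat"
    assume "strict_mono m" "strict_mono n"
    then have "p_right_null p (\<lambda>k. x (m k) - x (n k))"
      by (rule p_right_null_subsequence_differences[OF cauchy])
    moreover have "x j \<in> K" for j
      unfolding K_def by (simp add: hull_inc)
    moreover have "convex K"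
      unfolding K_def by simp
    ultimately show "(\<lambda>k. f (x (m k)) - f (x (n k))) \<longlonglongrightarrow> 0"
      by (intro increments_tendsto_zero_if_p_DPL_set[OF _ _ DPL]) (use assms(4) \<open>K \<subseteq> U\<close> in auto)
  qed
  then show "convergent (\<lambda>n. f (x n))"
    by (simp add: Cauchy_convergent_iff)
qed

end
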